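(* Let $c>0$ and $\lambda>0$ be constants, let $U\subset(0,T)\times\mathbb{R}^2$ be open, and for each $\varepsilon>0$ let $(\rho^\varepsilon,\Omega^\varepsilon)$, with $\rho^\varepsilon:U\to(0,\infty)$ and $\Omega^\varepsilon:U\to\mathbb{R}^2$, be a $C^1$ solution of the relaxation system $$\partial_t\rho^\varepsilon+\nabla_x\cdot(\rho^\varepsilon\Omega^\varepsilon)=0,\qquad \partial_t(\rho^\varepsilon\Omega^\varepsilon)+c\,\nabla_x\cdot(\rho^\varepsilon\Omega^\varepsilon\otimes\Omega^\varepsilon)+\lambda\nabla_x\rho^\varepsilon=\frac{\rho^\varepsilon}{\varepsilon}\,(1-|\Omega^\varepsilon|^2)\,\Omega^\varepsilon .$$ Suppose that, as $\varepsilon\to0$, $\rho^\varepsilon\to\rho^0$ and $\Omega^\varepsilon\to\Omega^0$ in $C^1_{loc}(U)$ (i.e. the functions and their first derivatives converge locally uniformly), where $\rho^0>0$ on $U$ and $\Omega^0$ vanishes nowhere on $U$. Then $|\Omega^0|=1$ on $U$ and $(\rho^0,\Omega^0)$ solves the macroscopic Vicsek system $$\partial_t\rho^0+\nabla_x\cdot(\rho^0\Omega^0)=0,\qquad \rho^0\big(\partial_t\Omega^0+c\,(\Omega^0\cdot\nabla_x)\Omega^0\big)+\lambda\,(\mathrm{Id}-\Omega^0\otimes\Omega^0)\nabla_x\rho^0=0 .$$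
   Context: $\mathrm{Id}$ is the $2\times2$ identity matrix, $a\otimes b$ the tensor product of vectors, and $\nabla_x\cdot(\rho\Omega\otimes\Omega)$ is the vector with components $\sum_j\partial_{x_j}(\rho\Omega_i\Omega_j)$. *)

theory Defs
  imports "HOL-Analysis.Analysis"
begin

type_synonym pt = "real \<times> (real^2)"

definition pd :: "(pt \<Rightarrow> 'a::real_normed_vector) \<Rightarrow> pt \<Rightarrow> pt \<Rightarrow> 'a" where
  "pd f p v = frechet_derivative f (at p) v"

definition dt :: "(pt \<Rightarrow> 'a::real_normed_vector) \<Rightarrow> pt \<Rightarrow> 'a" where
  "dt f p = pd f p (1, 0)"

definition dx :: "2 \<Rightarrow> (pt \<Rightarrow> 'a::real_normed_vector) \<Rightarrow> pt \<Rightarrow> 'a" where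
  "dx j f p = pd f p (0, axis j 1)"

definition C1_on :: "pt set \<Rightarrow> (pt \<Rightarrow> 'a::real_normed_vector) \<Rightarrow> bool" where
  "C1_on U f \<longleftrightarrow> (\<forall>p\<in>U. f differentiable (at p)) \<and>
                  (\<forall>v. continuous_on U (\<lambda>p. pd f p v))"

definition C1loc_conv :: "pt set \<Rightarrow> (real \<Rightarrow> pt \<Rightarrow> 'a::real_normed_vector) \<Rightarrow> (pt \<Rightarrow> 'a) \<Rightarrow> bool" where
  "C1loc_conv U f g \<longleftrightarrow> C1_on U g \<and>
     (\<forall>K. compact K \<and> K \<subseteq> U \<longrightarrow>
        uniform_limit K f g (at_right 0) \<and>
        (\<forall>v. uniform_limit K (\<lambda>e p. pd (f e) p v) (\<lambda>p. pd g p v) (at_right 0)))"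

end

theory Submission
  imports Defs
begin

(*
  By the product rule the left-hand sides of the mass and momentum equations
  depend only on the first-order jets of (rho, Omega); these expansions are continuous
  in the jets, so they converge pointwise under C^1_loc convergence.  The mass
  equation passes to the limit directly.  For the momentum equation M_eps =
  (rho/eps)(1 - |Omega|^2) Omega: multiplying by eps shows rho0 (1 - |Omega0|^2) Omega0 = 0,
  hence |Omega0| = 1; and M_eps is parallel to Omega_eps, so the limit M_0 is parallel to
  Omega0.  Finally, since |Omega0| = 1 on the open set U, every derivative of Omega0 is
  orthogonal to Omega0; projecting M_0 orthogonally to Omega0 then yields exactly the
  Vicsek momentum equation.
*)

lemma pd_has_derivative:
  "f differentiable (at p) \<Longrightarrow> (f has_derivative pd f p) (at p)"
  unfolding pd_def by (rule frechet_derivative_works[THEN iffD1])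

lemma pd_eqI: "(f has_derivative f') (at p) \<Longrightarrow> pd f p v = f' v"
  unfolding pd_def by (metis frechet_derivative_at)

lemma pd_component:
  fixes f :: "pt \<Rightarrow> real^'n"
  assumes "f differentiable (at p)"
  shows "pd (\<lambda>q. f q $ i) p v = pd f p v $ i"
    and "(\<lambda>q. f q $ i) differentiable (at p)"
proof -
  have "((\<lambda>q. f q $ i) has_derivative (\<lambda>v. pd f p v $ i)) (at p)"
    using bounded_linear.has_derivative[OF bounded_linear_vec_nth pd_has_derivative[OF assms]] .
  then show "pd (\<lambda>q. f q $ i) p v = pd f p v $ i" "(\<lambda>q. f q $ i) differentiable (at p)"
    by (auto intro: pd_eqI simp: differentiable_def)
qed

lemma pd_mult:
  fixes f g :: "pt \<Rightarrow> real"
  assumes "f differentiable (at p)" "g differentiable (at p)"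
  shows "pd (\<lambda>q. f q * g q) p v = f p * pd g p v + pd f p v * g p"
    and "(\<lambda>q. f q * g q) differentiable (at p)"
proof -
  have "((\<lambda>q. f q * g q) has_derivative (\<lambda>v. f p * pd g p v + pd f p v * g p)) (at p)"
    using has_derivative_mult[OF pd_has_derivative[OF assms(1)] pd_has_derivative[OF assms(2)]] .
  then show "pd (\<lambda>q. f q * g q) p v = f p * pd g p v + pd f p v * g p"
    and "(\<lambda>q. f q * g q) differentiable (at p)"
    by (auto intro: pd_eqI simp: differentiable_def)
qed

text \<open>A field of unit vectors on an open set has derivatives orthogonal to itself,
  since \<open>f \<bullet> f\<close> is locally constant.\<close>

lemma unit_field_derivative_orthogonal:
  fixes f :: "pt \<Rightarrow> 'a::real_inner"
  assumes "open U" "p \<in> U" "f differentiable (at p)" and unit: "\<And>q. q \<in> U \<Longrightarrow> norm (f q) = 1"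
  shows "f p \<bullet> pd f p v = 0"
proof -
  have "((\<lambda>q. f q \<bullet> f q) has_derivative (\<lambda>v. f p \<bullet> pd f p v + pd f p v \<bullet> f p)) (at p)"
    using has_derivative_inner[OF pd_has_derivative[OF assms(3)] pd_has_derivative[OF assms(3)]] .
  moreover have "((\<lambda>q. f q \<bullet> f q) has_derivative (\<lambda>v. 0)) (at p)"
    by (rule has_derivative_transform_within_open[OF _ assms(1,2), of "\<lambda>_. 1"])
       (simp_all add: unit power2_norm_eq_inner[symmetric])
  ultimately have "(\<lambda>v. f p \<bullet> pd f p v + pd f p v \<bullet> f p) = (\<lambda>v. 0)"
    by (rule has_derivative_unique)
  then show ?thesis by (metis inner_commute mult_2 mult_eq_0_iff zero_neq_numeral)
qed

lemma limit_eventually_equal: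
  fixes f :: "real \<Rightarrow> 'a::t2_space"
  assumes "(f \<longlongrightarrow> l) (at_right (0::real))" "\<forall>\<^sub>F e in at_right 0. f e = m"
  shows "l = m"
proof -
  have "(f \<longlongrightarrow> m) (at_right 0)"
    using assms(2) by (rule tendsto_eventually)
  with assms(1) show ?thesis
    by (rule tendsto_unique[OF trivial_limit_at_right_real])
qed

text \<open>The first claim comes from \<open>e A e \<rightarrow> 0\<close>,
  the second from \<open>|w e|\<^sup>2 A e - (w e \<bullet> A e) w e = 0\<close>.\<close>

lemma stiff_relaxation_limit:
  fixes r :: "real \<Rightarrow> real" and w A :: "real \<Rightarrow> 'a::real_inner"
  assumes relax: "\<And>e. e > 0 \<Longrightarrow> A e = (r e / e * (1 - (norm (w e))\<^sup>2)) *\<^sub>R w e"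
    and lim_r: "(r \<longlongrightarrow> r0) (at_right 0)" and lim_w: "(w \<longlongrightarrow> w0) (at_right 0)"
    and lim_A: "(A \<longlongrightarrow> A0) (at_right 0)"
    and r0_pos: "r0 > 0" and w0_nonzero: "w0 \<noteq> 0"
  shows "norm w0 = 1" and "A0 = (w0 \<bullet> A0) *\<^sub>R w0"
proof -
  have "((\<lambda>e. e *\<^sub>R A e) \<longlongrightarrow> 0 *\<^sub>R A0) (at_right 0)"
    by (intro tendsto_intros lim_A)
  moreover have "\<forall>\<^sub>F e in at_right 0. e *\<^sub>R A e = (r e * (1 - (norm (w e))\<^sup>2)) *\<^sub>R w e"
    using eventually_at_right_less[of 0] by eventually_elim (simp add: relax)
  ultimately have "((\<lambda>e. (r e * (1 - (norm (w e))\<^sup>2)) *\<^sub>R w e) \<longlongrightarrow> 0) (at_right 0)"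
    by (simp add: tendsto_cong)
  moreover have "((\<lambda>e. (r e * (1 - (norm (w e))\<^sup>2)) *\<^sub>R w e)
      \<longlongrightarrow> (r0 * (1 - (norm w0)\<^sup>2)) *\<^sub>R w0) (at_right 0)"
    by (intro tendsto_intros lim_r lim_w)
  ultimately have "(r0 * (1 - (norm w0)\<^sup>2)) *\<^sub>R w0 = 0"
    by (rule tendsto_unique[OF trivial_limit_at_right_real, symmetric])
  with r0_pos w0_nonzero have "(norm w0)\<^sup>2 = 1" by simp
  then show unit: "norm w0 = 1"
    using norm_ge_zero[of w0] by (auto simp: power2_eq_1_iff)
  have "((\<lambda>e. (w e \<bullet> w e) *\<^sub>R A e - (w e \<bullet> A e) *\<^sub>R w e)
      \<longlongrightarrow> (w0 \<bullet> w0) *\<^sub>R A0 - (w0 \<bullet> A0) *\<^sub>R w0) (at_right 0)"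
    by (intro tendsto_intros lim_A lim_w)
  moreover have "\<forall>\<^sub>F e in at_right 0. (w e \<bullet> w e) *\<^sub>R A e - (w e \<bullet> A e) *\<^sub>R w e = 0"
    using eventually_at_right_less[of 0] by eventually_elim (simp add: relax inner_commute)
  ultimately have "(w0 \<bullet> w0) *\<^sub>R A0 - (w0 \<bullet> A0) *\<^sub>R w0 = 0"
    by (rule limit_eventually_equal)
  then show "A0 = (w0 \<bullet> A0) *\<^sub>R w0"
    using unit by (simp add: power2_norm_eq_inner[symmetric])
qed

text \<open>Product-rule expansions of the left-hand sides of the mass and momentum
  equations, written in terms of the first-order jets of the density \<open>r\<close> and velocity \<open>w\<close>.\<close>

definition mass_expansion :: "(pt \<Rightarrow> real) \<Rightarrow> (pt \<Rightarrow> real^2) \<Rightarrow> pt \<Rightarrow> real" where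
  "mass_expansion r w p = dt r p + (\<Sum>j\<in>UNIV. r p * dx j w p $ j + dx j r p * w p $ j)"

definition momentum_expansion ::
    "real \<Rightarrow> real \<Rightarrow> (pt \<Rightarrow> real) \<Rightarrow> (pt \<Rightarrow> real^2) \<Rightarrow> pt \<Rightarrow> real^2" where
  "momentum_expansion c lam r w p = (\<chi> i. r p * dt w p $ i + dt r p * w p $ i
     + c * (\<Sum>j\<in>UNIV. r p * w p $ i * dx j w p $ j + (r p * dx j w p $ i + dx j r p * w p $ i) * w p $ j)
     + lam * dx i r p)"

lemma mass_eq_expansion:
  assumes "r differentiable (at p)" "w differentiable (at p)"
  shows "dt r p + (\<Sum>j\<in>UNIV. dx j (\<lambda>q. r q * w q $ j) p) = mass_expansion r w p"
  unfolding mass_expansion_def dt_def dx_def using assms by (simp add: pd_mult pd_component)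

lemma momentum_eq_expansion:
  assumes "r differentiable (at p)" "w differentiable (at p)"
  shows "dt (\<lambda>q. r q * w q $ i) p + c * (\<Sum>j\<in>UNIV. dx j (\<lambda>q. r q * w q $ i * w q $ j) p)
           + lam * dx i r p = momentum_expansion c lam r w p $ i"
  unfolding momentum_expansion_def dt_def dx_def using assms by (simp add: pd_mult pd_component)

lemma C1loc_conv_at:
  assumes "C1loc_conv U f g" "p \<in> U"
  shows "((\<lambda>e. f e p) \<longlongrightarrow> g p) (at_right 0)"
    and "((\<lambda>e. pd (f e) p v) \<longlongrightarrow> pd g p v) (at_right 0)"
proof -
  have "compact {p}" "{p} \<subseteq> U" using assms(2) by auto
  with assms(1) have "uniform_limit {p} f g (at_right 0)"
    and "uniform_limit {p} (\<lambda>e q. pd (f e) q v) (\<lambda>q. pd g q v) (at_right 0)"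
    unfolding C1loc_conv_def by blast+
  then show "((\<lambda>e. f e p) \<longlongrightarrow> g p) (at_right 0)"
    and "((\<lambda>e. pd (f e) p v) \<longlongrightarrow> pd g p v) (at_right 0)"
    by (auto intro: tendsto_uniform_limitI)
qed

lemma expansions_tendsto:
  assumes r: "C1loc_conv U r r0" and w: "C1loc_conv U w w0" and p: "p \<in> U"
  shows "((\<lambda>e. mass_expansion (r e) (w e) p) \<longlongrightarrow> mass_expansion r0 w0 p) (at_right 0)"
    and "((\<lambda>e. momentum_expansion c lam (r e) (w e) p)
           \<longlongrightarrow> momentum_expansion c lam r0 w0 p) (at_right 0)"
  unfolding mass_expansion_def momentum_expansion_def dt_def dx_def
  by (intro tendsto_intros C1loc_conv_at[OF r p] C1loc_conv_at[OF w p])+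

text \<open>The algebraic heart: write the momentum expansion as
  \<open>s u + r V + \<lambda> \<nabla>r\<close> with \<open>u = w p\<close> and \<open>V = \<partial>\<^sub>t w + c (u\<cdot>\<nabla>) w\<close>.  If \<open>|u| = 1\<close>,
  \<open>u\<close> is orthogonal to all derivatives of \<open>w\<close> (so \<open>u \<bullet> V = 0\<close>) and the expansion is
  parallel to \<open>u\<close>, then its projection orthogonal to \<open>u\<close>, namely
  \<open>r V + \<lambda> (Id - u \<otimes> u) \<nabla>r\<close>, vanishes: the Vicsek momentum equation.\<close>

lemma vicsek_projection:
  fixes r :: "pt \<Rightarrow> real" and w :: "pt \<Rightarrow> real^2"
  assumes unit: "norm (w p) = 1" and orth: "\<And>v. w p \<bullet> pd w p v = 0"
    and parallel: "momentum_expansion c lam r w p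
                     = (w p \<bullet> momentum_expansion c lam r w p) *\<^sub>R w p"
  shows "r p * (dt w p $ i + c * (\<Sum>j\<in>UNIV. w p $ j * dx j w p $ i))
           + lam * (dx i r p - w p $ i * (\<Sum>j\<in>UNIV. w p $ j * dx j r p)) = 0"
proof -
  define u where "u = w p"
  define V where "V = dt w p + c *\<^sub>R (\<Sum>j\<in>UNIV. u $ j *\<^sub>R dx j w p)"
  define G :: "real^2" where "G = (\<chi> j. dx j r p)"
  define s where "s = dt r p + c * (\<Sum>j\<in>UNIV. r p * dx j w p $ j + dx j r p * u $ j)"
  have decomp: "momentum_expansion c lam r w p = s *\<^sub>R u + r p *\<^sub>R V + lam *\<^sub>R G"
    unfolding momentum_expansion_def s_def V_def G_def u_def
    by (simp add: vec_eq_iff sum_distrib_left sum_distrib_right sum.distrib algebra_simps)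
  have "u \<bullet> V = 0"
    using orth unfolding V_def u_def dt_def dx_def
    by (simp add: inner_add_right inner_sum_right)
  moreover have "u \<bullet> u = 1"
    using unit unfolding u_def by (simp add: power2_norm_eq_inner[symmetric])
  ultimately have "r p *\<^sub>R V + lam *\<^sub>R (G - (u \<bullet> G) *\<^sub>R u) = 0"
    using parallel unfolding decomp u_def[symmetric]
    by (simp add: inner_add_right algebra_simps)
  then show ?thesis
    unfolding V_def G_def u_def by (simp add: vec_eq_iff inner_vec_def mult.commute)
qed


lemma relaxation_limit_at:
  fixes \<rho> :: "real \<Rightarrow> pt \<Rightarrow> real" and \<Omega> :: "real \<Rightarrow> pt \<Rightarrow> real^2"
  assumes p: "p \<in> U"
    and mass: "\<And>e. e > 0 \<Longrightarrow> mass_expansion (\<rho> e) (\<Omega> e) p = 0"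
    and mom: "\<And>e. e > 0 \<Longrightarrow> momentum_expansion c lam (\<rho> e) (\<Omega> e) p
                 = (\<rho> e p / e * (1 - (norm (\<Omega> e p))\<^sup>2)) *\<^sub>R \<Omega> e p"
    and conv_\<rho>: "C1loc_conv U \<rho> \<rho>0" and conv_\<Omega>: "C1loc_conv U \<Omega> \<Omega>0"
    and \<rho>0_pos: "\<rho>0 p > 0" and \<Omega>0_nonzero: "\<Omega>0 p \<noteq> 0"
  shows "norm (\<Omega>0 p) = 1"
    and "mass_expansion \<rho>0 \<Omega>0 p = 0"
    and "momentum_expansion c lam \<rho>0 \<Omega>0 p
           = (\<Omega>0 p \<bullet> momentum_expansion c lam \<rho>0 \<Omega>0 p) *\<^sub>R \<Omega>0 p"
proof -
  have "\<forall>\<^sub>F e in at_right 0. mass_expansion (\<rho> e) (\<Omega> e) p = 0"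
    using eventually_at_right_less[of 0] by eventually_elim (rule mass)
  with expansions_tendsto(1)[OF conv_\<rho> conv_\<Omega> p]
  show "mass_expansion \<rho>0 \<Omega>0 p = 0"
    by (rule limit_eventually_equal)
  show "norm (\<Omega>0 p) = 1"
    and "momentum_expansion c lam \<rho>0 \<Omega>0 p
           = (\<Omega>0 p \<bullet> momentum_expansion c lam \<rho>0 \<Omega>0 p) *\<^sub>R \<Omega>0 p"
    using stiff_relaxation_limit[OF mom C1loc_conv_at(1)[OF conv_\<rho> p] C1loc_conv_at(1)[OF conv_\<Omega> p]
        expansions_tendsto(2)[OF conv_\<rho> conv_\<Omega> p] \<rho>0_pos \<Omega>0_nonzero] by blast+
qed

theorem proposition3p1:
  fixes c lam T :: real
    and U :: "pt set"
    and \<rho> :: "real \<Rightarrow> pt \<Rightarrow> real" and \<Omega> :: "real \<Rightarrow> pt \<Rightarrow> real^2"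
    and \<rho>0 :: "pt \<Rightarrow> real" and \<Omega>0 :: "pt \<Rightarrow> real^2"
  assumes c: "c > 0" and lam: "lam > 0"
    and U: "open U" "U \<subseteq> {0<..<T} \<times> UNIV"
    and pos: "\<And>e p. e > 0 \<Longrightarrow> p \<in> U \<Longrightarrow> \<rho> e p > 0"
    and C1: "\<And>e. e > 0 \<Longrightarrow> C1_on U (\<rho> e) \<and> C1_on U (\<Omega> e)"
    and mass: "\<And>e p. e > 0 \<Longrightarrow> p \<in> U \<Longrightarrow>
        dt (\<rho> e) p + (\<Sum>j\<in>UNIV. dx j (\<lambda>q. \<rho> e q * \<Omega> e q $ j) p) = 0"
    and mom: "\<And>e p i. e > 0 \<Longrightarrow> p \<in> U \<Longrightarrow>
        dt (\<lambda>q. \<rho> e q * \<Omega> e q $ i) p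
        + c * (\<Sum>j\<in>UNIV. dx j (\<lambda>q. \<rho> e q * \<Omega> e q $ i * \<Omega> e q $ j) p)
        + lam * dx i (\<rho> e) p
        = \<rho> e p / e * (1 - (norm (\<Omega> e p))\<^sup>2) * \<Omega> e p $ i"
    and convr: "C1loc_conv U \<rho> \<rho>0"
    and convO: "C1loc_conv U \<Omega> \<Omega>0"
    and pos0: "\<And>p. p \<in> U \<Longrightarrow> \<rho>0 p > 0"
    and nz0: "\<And>p. p \<in> U \<Longrightarrow> \<Omega>0 p \<noteq> 0"
  shows "(\<forall>p\<in>U. norm (\<Omega>0 p) = 1)
    \<and> (\<forall>p\<in>U. dt \<rho>0 p + (\<Sum>j\<in>UNIV. dx j (\<lambda>q. \<rho>0 q * \<Omega>0 q $ j) p) = 0)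
    \<and> (\<forall>p\<in>U. \<forall>i.
        \<rho>0 p * (dt (\<lambda>q. \<Omega>0 q $ i) p
                 + c * (\<Sum>j\<in>UNIV. \<Omega>0 p $ j * dx j (\<lambda>q. \<Omega>0 q $ i) p))
        + lam * (dx i \<rho>0 p - \<Omega>0 p $ i * (\<Sum>j\<in>UNIV. \<Omega>0 p $ j * dx j \<rho>0 p)) = 0)"
proof -
  have diff: "\<rho> e differentiable (at p)" "\<Omega> e differentiable (at p)" if "e > 0" "p \<in> U" for e p
    using C1[OF that(1)] that(2) unfolding C1_on_def by blast+
  have diff0: "\<rho>0 differentiable (at p)" "\<Omega>0 differentiable (at p)" if "p \<in> U" for p
    using convr convO that unfolding C1loc_conv_def C1_on_def by blast+
  have mass_e: "mass_expansion (\<rho> e) (\<Omega> e) p = 0" if "e > 0" "p \<in> U" for e p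
    using mass[OF that] mass_eq_expansion[OF diff[OF that]] by simp
  have mom_e: "momentum_expansion c lam (\<rho> e) (\<Omega> e) p
      = (\<rho> e p / e * (1 - (norm (\<Omega> e p))\<^sup>2)) *\<^sub>R \<Omega> e p" if "e > 0" "p \<in> U" for e p
    using mom[OF that] momentum_eq_expansion[OF diff[OF that]] by (simp add: vec_eq_iff)
  have limit: "norm (\<Omega>0 p) = 1" "mass_expansion \<rho>0 \<Omega>0 p = 0"
    "momentum_expansion c lam \<rho>0 \<Omega>0 p = (\<Omega>0 p \<bullet> momentum_expansion c lam \<rho>0 \<Omega>0 p) *\<^sub>R \<Omega>0 p"
    if p: "p \<in> U" for p
    using relaxation_limit_at[OF p mass_e[OF _ p] mom_e[OF _ p] convr convO pos0[OF p] nz0[OF p]]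
    by blast+
  show ?thesis
  proof (intro conjI ballI allI)
    fix p i assume p: "p \<in> U"
    show "norm (\<Omega>0 p) = 1" using limit(1)[OF p] .
    show "dt \<rho>0 p + (\<Sum>j\<in>UNIV. dx j (\<lambda>q. \<rho>0 q * \<Omega>0 q $ j) p) = 0"
      using limit(2)[OF p] mass_eq_expansion[OF diff0[OF p]] by simp
    have orth: "\<Omega>0 p \<bullet> pd \<Omega>0 p v = 0" for v
      using unit_field_derivative_orthogonal[OF U(1) p diff0(2)[OF p]] limit(1) by blast
    show "\<rho>0 p * (dt (\<lambda>q. \<Omega>0 q $ i) p + c * (\<Sum>j\<in>UNIV. \<Omega>0 p $ j * dx j (\<lambda>q. \<Omega>0 q $ i) p))
        + lam * (dx i \<rho>0 p - \<Omega>0 p $ i * (\<Sum>j\<in>UNIV. \<Omega>0 p $ j * dx j \<rho>0 p)) = 0"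
      using vicsek_projection[OF limit(1)[OF p] orth limit(3)[OF p], of i]
      unfolding dt_def dx_def by (simp add: pd_component[OF diff0(2)[OF p]])
  qed
qed

end
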